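(* Let $F:\mathbb{C}^n\to\mathbb{C}^n$ be a polynomial map of the form $F=\mathrm{Id}+H$, i.e. $F_i=X_i+H_i(X_1,\dots,X_n)$, where each $H_i$ is a polynomial of lower degree $d_i\ge2$, $1\le i\le n$. For each $i$, let $(P_k^i)_{k\ge0}$ be defined by $P_0^i=X_i$ and $P_k^i(X)=P_{k-1}^i(F_1,\dots,F_n)-P_{k-1}^i(X_1,\dots,X_n)$ for $k\ge1$. Then the following are equivalent: (a) $F$ is a quasi-translation; (b) $JH\cdot H=0$, where $JH=(\partial H_i/\partial X_j)_{i,j}$ is the Jacobian matrix of $H$ and $H$ is viewed as a column vector; (c) $P_2^i=0$ for all $1\le i\le n$.
   Context: A polynomial map $F=\mathrm{Id}+H:\mathbb{C}^n\to\mathbb{C}^n$ is a quasi-translation if it is invertible with polynomial inverse $F^{-1}=\mathrm{Id}-H$. The lower degree of a nonzero polynomial is the smallest degree of its nonzero homogeneous components. *)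

theory Defs
  imports "HOL-Analysis.Analysis"
begin

text \<open>A monomial is an exponent vector m :: 'n \<Rightarrow> nat, of total degree sum m UNIV.
  A coefficient function c with finite support represents the polynomial
  sum_m c m * X^m; over C a polynomial is determined by its polynomial function.\<close>

definition monom_eval :: "('n::finite \<Rightarrow> nat) \<Rightarrow> complex^'n \<Rightarrow> complex" where
  "monom_eval m x = (\<Prod>i\<in>UNIV. (x $ i) ^ m i)"

definition represents :: "(('n::finite \<Rightarrow> nat) \<Rightarrow> complex) \<Rightarrow> (complex^'n \<Rightarrow> complex) \<Rightarrow> bool" where
  "represents c f \<longleftrightarrow> finite {m. c m \<noteq> 0} \<and>
     (\<forall>x. f x = (\<Sum>m\<in>{m. c m \<noteq> 0}. c m * monom_eval m x))"

text \<open>f is a polynomial all of whose nonzero homogeneous components have degree \<ge> d,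
  i.e. f = 0 or f is a nonzero polynomial of lower degree \<ge> d.\<close>
definition poly_lower_degree_ge :: "(complex^'n::finite \<Rightarrow> complex) \<Rightarrow> nat \<Rightarrow> bool" where
  "poly_lower_degree_ge f d \<longleftrightarrow>
     (\<exists>c. represents c f \<and> (\<forall>m. c m \<noteq> 0 \<longrightarrow> d \<le> sum m UNIV))"

text \<open>Quasi-translation: F = Id + H is invertible with inverse Id - H.\<close>
definition quasi_translation :: "(complex^'n::finite \<Rightarrow> complex^'n) \<Rightarrow> bool" where
  "quasi_translation H \<longleftrightarrow>
     (\<forall>x. (x + H x) - H (x + H x) = x \<and> (x - H x) + H (x - H x) = x)"

definition jacobian :: "(complex^'n::finite \<Rightarrow> complex^'n) \<Rightarrow> complex^'n \<Rightarrow> complex^'n^'n" where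
  "jacobian H x = (\<chi> i j. deriv (\<lambda>t. H (\<chi> k. if k = j then t else x $ k) $ i) (x $ j))"

primrec Pseq :: "(complex^'n::finite \<Rightarrow> complex^'n) \<Rightarrow> nat \<Rightarrow> 'n \<Rightarrow> complex^'n \<Rightarrow> complex" where
  "Pseq F 0 i = (\<lambda>x. x $ i)"
| "Pseq F (Suc k) i = (\<lambda>x. Pseq F k i (F x) - Pseq F k i x)"

end

theory Submission
  imports Defs "HOL-Computational_Algebra.Polynomial"
begin

text \<open>Both (a) and (c) say that \<open>H \<circ> F = H\<close>: for (c) since
  \<open>P\<^sub>2 = H(F) - H\<close>, for (a) since \<open>H(F) = H\<close> gives \<open>H(X + tH) = H\<close> for all
  integers \<open>t \<ge> 0\<close>, hence, as a polynomial identity in \<open>t\<close>, for \<open>t = -1\<close> too.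
  Differentiating \<open>H(X + tH) = H\<close> at \<open>t = 0\<close> gives (b). Conversely, under (b) the
  polynomial curve \<open>W(t) = H(x + tH(x)) - H(x)\<close> satisfies the linear equation
  \<open>W' = -JH(x + tH(x)) W\<close> with \<open>W(0) = 0\<close>; comparing coefficients forces \<open>W = 0\<close>.\<close>

definition monom_partial :: "('n::finite \<Rightarrow> nat) \<Rightarrow> 'n \<Rightarrow> complex^'n \<Rightarrow> complex" where
  "monom_partial m j y = of_nat (m j) * y$j ^ (m j - 1) * (\<Prod>i\<in>UNIV-{j}. y$i ^ m i)"

definition coeffs_partial :: "(('n::finite \<Rightarrow> nat) \<Rightarrow> complex) \<Rightarrow> 'n \<Rightarrow> complex^'n \<Rightarrow> complex" where
  "coeffs_partial c j y = (\<Sum>m\<in>{m. c m \<noteq> 0}. c m * monom_partial m j y)"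

lemma has_field_derivative_monom_eval_line:
  fixes x v :: "complex^'n::finite"
  shows "((\<lambda>t. monom_eval m (x + t *s v)) has_field_derivative
           (\<Sum>j\<in>UNIV. v$j * monom_partial m j (x + t *s v))) (at t)"
proof -
  have "((\<lambda>t. \<Prod>i\<in>UNIV. (\<lambda>i t. (x$i + t * v$i) ^ m i) i t) has_field_derivative
      (\<Sum>i\<in>UNIV. (of_nat (m i) * (x$i + t * v$i) ^ (m i - 1) * v$i) *
         (\<Prod>l\<in>UNIV-{i}. (x$l + t * v$l) ^ m l))) (at t)"
    by (rule has_field_derivative_prod) (auto intro!: derivative_eq_intros)
  moreover have "(\<Sum>i\<in>UNIV. (of_nat (m i) * (x$i + t * v$i) ^ (m i - 1) * v$i) *
         (\<Prod>l\<in>UNIV-{i}. (x$l + t * v$l) ^ m l)) = (\<Sum>j\<in>UNIV. v$j * monom_partial m j (x + t *s v))"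
    by (rule sum.cong) (simp_all add: monom_partial_def)
  ultimately show ?thesis
    by (simp add: monom_eval_def)
qed

lemma has_field_derivative_represents_line:
  assumes "represents c f"
  shows "((\<lambda>t. f (x + t *s v)) has_field_derivative
           (\<Sum>j\<in>UNIV. v$j * coeffs_partial c j (x + t *s v))) (at t)"
proof -
  from assms have f: "\<And>x. f x = (\<Sum>m\<in>{m. c m \<noteq> 0}. c m * monom_eval m x)"
    by (auto simp: represents_def)
  have "((\<lambda>t. \<Sum>m\<in>{m. c m \<noteq> 0}. c m * monom_eval m (x + t *s v)) has_field_derivative
     (\<Sum>m\<in>{m. c m \<noteq> 0}. c m * (\<Sum>j\<in>UNIV. v$j * monom_partial m j (x + t *s v)))) (at t)"
    by (intro DERIV_sum DERIV_cmult has_field_derivative_monom_eval_line)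
  moreover have "(\<Sum>m\<in>{m. c m \<noteq> 0}. c m * (\<Sum>j\<in>UNIV. v$j * monom_partial m j (x + t *s v)))
     = (\<Sum>j\<in>UNIV. v$j * coeffs_partial c j (x + t *s v))"
    by (simp add: coeffs_partial_def sum_distrib_left mult_ac sum.swap[of _ "{m. c m \<noteq> 0}"])
  ultimately show ?thesis
    by (simp add: f)
qed

lemma has_field_derivative_represents_partial:
  fixes y :: "complex^'n::finite"
  assumes "represents c f"
  shows "((\<lambda>s. f (\<chi> k. if k = j then s else y$k)) has_field_derivative coeffs_partial c j y) (at (y$j))"
proof -
  define x :: "complex^'n" where "x = (\<chi> k. if k = j then 0 else y$k)"
  have line: "x + s *s axis j 1 = (\<chi> k. if k = j then s else y$k)" for s
    by (simp add: x_def vec_eq_iff axis_def)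
  have y_eq: "x + y$j *s axis j 1 = y"
    by (simp add: x_def vec_eq_iff axis_def)
  have "(\<Sum>k\<in>UNIV. axis j 1 $ k * coeffs_partial c k (x + y$j *s axis j 1)) = coeffs_partial c j y"
    unfolding y_eq by (simp add: axis_def if_distrib[of "\<lambda>a. a * _"] cong: if_cong)
  then show ?thesis
    using has_field_derivative_represents_line[OF assms, of x "axis j 1" "y$j"] by (simp add: line)
qed

definition polyfun :: "(complex \<Rightarrow> complex) \<Rightarrow> bool" where
  "polyfun g \<longleftrightarrow> (\<exists>p. poly p = g)"

lemma polyfun_const: "polyfun (\<lambda>t. a)"
  unfolding polyfun_def by (rule exI[of _ "[:a:]"]) auto

lemma polyfun_linear: "polyfun (\<lambda>t. a + t * b)"
  unfolding polyfun_def by (rule exI[of _ "[:a, b:]"]) (auto simp: mult_ac)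

lemma polyfun_diff: "polyfun f \<Longrightarrow> polyfun g \<Longrightarrow> polyfun (\<lambda>t. f t - g t)"
  unfolding polyfun_def by (metis poly_diff)

lemma polyfun_mult: "polyfun f \<Longrightarrow> polyfun g \<Longrightarrow> polyfun (\<lambda>t. f t * g t)"
  unfolding polyfun_def by (metis poly_mult)

lemma polyfun_power: "polyfun f \<Longrightarrow> polyfun (\<lambda>t. f t ^ n)"
  by (induction n) (auto intro: polyfun_mult polyfun_const)

lemma polyfun_add: "polyfun f \<Longrightarrow> polyfun g \<Longrightarrow> polyfun (\<lambda>t. f t + g t)"
  unfolding polyfun_def by (metis poly_add)

lemma polyfun_sum: "(\<And>a. a \<in> A \<Longrightarrow> polyfun (f a)) \<Longrightarrow> polyfun (\<lambda>t. \<Sum>a\<in>A. f a t)"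
  by (induction A rule: infinite_finite_induct) (auto intro: polyfun_add polyfun_const)

lemma polyfun_prod: "(\<And>a. a \<in> A \<Longrightarrow> polyfun (f a)) \<Longrightarrow> polyfun (\<lambda>t. \<Prod>a\<in>A. f a t)"
  by (induction A rule: infinite_finite_induct) (auto intro: polyfun_mult polyfun_const)

lemmas polyfun_intros =
  polyfun_sum polyfun_prod polyfun_mult polyfun_power polyfun_linear polyfun_const

lemma polyfun_represents_line:
  assumes "represents c f"
  shows "polyfun (\<lambda>t. f (x + t *s v))"
proof -
  from assms have f: "\<And>x. f x = (\<Sum>m\<in>{m. c m \<noteq> 0}. c m * monom_eval m x)"
    by (auto simp: represents_def)
  show ?thesis
    unfolding f monom_eval_def by (auto intro!: polyfun_intros)
qed

lemma polyfun_coeffs_partial_line: "polyfun (\<lambda>t. coeffs_partial c j (x + t *s v))"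
  unfolding coeffs_partial_def monom_partial_def by (auto intro!: polyfun_intros)

lemma poly_eq_0_if_vanishes_on_nats:
  fixes p :: "complex poly"
  assumes "\<And>n::nat. poly p (of_nat n) = 0"
  shows "p = 0"
proof (rule ccontr)
  assume "p \<noteq> 0"
  then have "finite {x. poly p x = 0}"
    by (rule poly_roots_finite)
  moreover have "range (of_nat :: nat \<Rightarrow> complex) \<subseteq> {x. poly p x = 0}"
    using assms by auto
  ultimately have "finite (range (of_nat :: nat \<Rightarrow> complex))"
    by (rule rev_finite_subset)
  then show False
    using finite_imageD inj_of_nat by blast
qed

text \<open>Uniqueness for the linear system \<open>W' = -AW\<close>, \<open>W(0) = 0\<close> over polynomials: the
  coefficient of \<open>t^(k+1)\<close> in \<open>W\<close> is determined by those of degree \<open>\<le> k\<close>.\<close>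
lemma poly_linear_system_zero:
  fixes W :: "'n::finite \<Rightarrow> complex poly" and A :: "'n \<Rightarrow> 'n \<Rightarrow> complex poly"
  assumes "\<And>i. coeff (W i) 0 = 0"
    and "\<And>i. pderiv (W i) = - (\<Sum>j\<in>UNIV. A i j * W j)"
  shows "W i = 0"
proof -
  have "\<forall>i. coeff (W i) n = 0" for n
  proof (induction n rule: less_induct)
    case (less n)
    show ?case
    proof (cases n)
      case 0
      then show ?thesis
        using assms(1) by simp
    next
      case (Suc k)
      show ?thesis
      proof
        fix i
        have "coeff (pderiv (W i)) k = - (\<Sum>j\<in>UNIV. \<Sum>a\<le>k. coeff (A i j) a * coeff (W j) (k - a))"
          by (simp add: assms(2) coeff_sum coeff_mult)
        also have "\<dots> = 0"
          using less.IH Suc by (auto intro!: sum.neutral)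
        finally have "of_nat (Suc k) * coeff (W i) (Suc k) = 0"
          by (simp add: coeff_pderiv)
        then show "coeff (W i) n = 0"
          using Suc by (simp del: of_nat_Suc)
      qed
    qed
  qed
  then show ?thesis
    by (simp add: poly_eq_iff)
qed

lemma Pseq_2_eq_0_iff:
  "(\<forall>i. Pseq (\<lambda>x. x + H x) 2 i = (\<lambda>x. 0)) \<longleftrightarrow> (\<forall>x. H (x + H x) = H x)"
proof -
  have "Pseq (\<lambda>x. x + H x) 2 i x = H (x + H x) $ i - H x $ i" for i x
    by (simp add: numeral_2_eq_2)
  then show ?thesis
    by (auto simp: fun_eq_iff vec_eq_iff)
qed

locale polynomial_map =
  fixes H :: "complex^'n::finite \<Rightarrow> complex^'n"
  assumes polynomial_components: "\<exists>c. represents c (\<lambda>x. H x $ i)"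
begin

definition component_coeffs :: "'n \<Rightarrow> ('n \<Rightarrow> nat) \<Rightarrow> complex" where
  "component_coeffs i = (SOME c. represents c (\<lambda>x. H x $ i))"

lemma represents_component_coeffs: "represents (component_coeffs i) (\<lambda>x. H x $ i)"
  unfolding component_coeffs_def by (rule someI_ex[OF polynomial_components])

lemma jacobian_eq: "jacobian H y $ i $ j = coeffs_partial (component_coeffs i) j y"
  unfolding jacobian_def
  using has_field_derivative_represents_partial[OF represents_component_coeffs] by (simp add: DERIV_imp_deriv)

lemma has_field_derivative_line:
  "((\<lambda>t. H (x + t *s v) $ i) has_field_derivative (jacobian H (x + t *s v) *v v) $ i) (at t)"
  using has_field_derivative_represents_line[OF represents_component_coeffs]
  by (simp add: matrix_vector_mult_def jacobian_eq mult_ac)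

lemma polyfun_line: "polyfun (\<lambda>t. H (x + t *s v) $ i)"
  using polyfun_represents_line[OF represents_component_coeffs] .

lemma invariant_along_line:
  assumes invariant: "\<forall>x. H (x + H x) = H x"
  shows "H (x + t *s H x) = H x"
proof -
  have on_nats: "H (x + of_nat n *s H x) = H x" for n
  proof (induction n)
    case (Suc n)
    have "x + of_nat (Suc n) *s H x = (x + of_nat n *s H x) + H (x + of_nat n *s H x)"
      by (simp add: Suc.IH vec_eq_iff algebra_simps)
    then show ?case
      using invariant Suc.IH by metis
  qed simp
  have "H (x + t *s H x) $ i = H x $ i" for i
  proof -
    obtain p where p: "poly p = (\<lambda>t. H (x + t *s H x) $ i - H x $ i)"
      using polyfun_diff[OF polyfun_line polyfun_const] unfolding polyfun_def by blast
    have "p = 0"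
      by (rule poly_eq_0_if_vanishes_on_nats) (simp add: p on_nats)
    then show ?thesis
      using fun_cong[OF p, of t] by simp
  qed
  then show ?thesis
    by (simp add: vec_eq_iff)
qed

lemma jacobian_mult_self_if_invariant:
  assumes "\<forall>x. H (x + H x) = H x"
  shows "jacobian H x *v H x = 0"
proof -
  have "(jacobian H x *v H x) $ i = 0" for i
  proof -
    have "((\<lambda>t. H (x + t *s H x) $ i) has_field_derivative (jacobian H x *v H x) $ i) (at 0)"
      using has_field_derivative_line[where t=0 and v="H x"] by simp
    moreover have "((\<lambda>t. H (x + t *s H x) $ i) has_field_derivative 0) (at 0)"
      using invariant_along_line[OF assms] by simp
    ultimately show ?thesis
      by (rule DERIV_unique)
  qed
  then show ?thesis
    by (simp add: vec_eq_iff)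
qed

lemma invariant_if_jacobian_mult_self:
  assumes annihilates: "\<forall>y. jacobian H y *v H y = 0"
  shows "H (x + H x) = H x"
proof -
  define v where "v = H x"
  have "\<forall>i. \<exists>p. poly p = (\<lambda>t. H (x + t *s v) $ i - v $ i)"
    using polyfun_diff[OF polyfun_line polyfun_const] unfolding polyfun_def by blast
  then obtain W where W: "\<And>i. poly (W i) = (\<lambda>t. H (x + t *s v) $ i - v $ i)"
    by metis
  have "\<forall>i j. \<exists>p. poly p = (\<lambda>t. coeffs_partial (component_coeffs i) j (x + t *s v))"
    using polyfun_coeffs_partial_line unfolding polyfun_def by blast
  then obtain A where A: "\<And>i j. poly (A i j) = (\<lambda>t. coeffs_partial (component_coeffs i) j (x + t *s v))"
    by metis
  have W0: "coeff (W i) 0 = 0" for i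
    using fun_cong[OF W[of i], of 0] by (simp add: poly_0_coeff_0 v_def)
  have W': "pderiv (W i) = - (\<Sum>j\<in>UNIV. A i j * W j)" for i
  proof (rule poly_eq_poly_eq_iff[THEN iffD1, OF ext])
    fix t
    let ?y = "x + t *s v"
    have "((\<lambda>t. poly (W i) t) has_field_derivative (jacobian H ?y *v v) $ i) (at t)"
      unfolding W using has_field_derivative_line[where t=t and v=v] by (auto intro!: derivative_eq_intros)
    then have "poly (pderiv (W i)) t = (jacobian H ?y *v v) $ i - (jacobian H ?y *v H ?y) $ i"
      using DERIV_unique[OF poly_DERIV] annihilates by simp
    also have "\<dots> = - (\<Sum>j\<in>UNIV. coeffs_partial (component_coeffs i) j ?y * (H ?y $ j - v $ j))"
      by (simp add: matrix_vector_mult_def jacobian_eq sum_subtractf[symmetric] algebra_simps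
          sum_negf[symmetric])
    also have "\<dots> = poly (- (\<Sum>j\<in>UNIV. A i j * W j)) t"
      by (simp add: poly_sum A W)
    finally show "poly (pderiv (W i)) t = poly (- (\<Sum>j\<in>UNIV. A i j * W j)) t" .
  qed
  have "W i = 0" for i
    by (rule poly_linear_system_zero[OF W0 W'])
  then have "H (x + v) $ i = v $ i" for i
    using fun_cong[OF W[of i], of 1] by simp
  then show ?thesis
    by (simp add: vec_eq_iff v_def)
qed

lemma quasi_translation_iff_invariant:
  "quasi_translation H \<longleftrightarrow> (\<forall>x. H (x + H x) = H x)"
proof
  assume "quasi_translation H"
  then have "x + H x - H (x + H x) = x" for x
    by (simp add: quasi_translation_def)
  then show "\<forall>x. H (x + H x) = H x"
    by (metis add_diff_cancel_left' diff_diff_eq2 diff_eq_diff_eq)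
next
  assume invariant: "\<forall>x. H (x + H x) = H x"
  have "H (x - H x) = H x" for x
    using invariant_along_line[OF invariant, of x "-1"] by simp
  with invariant show "quasi_translation H"
    by (simp add: quasi_translation_def)
qed

end

theorem proposition2p7:
  fixes H :: "complex^'n \<Rightarrow> complex^'n"
  assumes "\<And>i. poly_lower_degree_ge (\<lambda>x. H x $ i) 2"
  shows "(quasi_translation H \<longleftrightarrow> (\<forall>x. jacobian H x *v H x = 0))
       \<and> ((\<forall>x. jacobian H x *v H x = 0) \<longleftrightarrow> (\<forall>i. Pseq (\<lambda>x. x + H x) 2 i = (\<lambda>x. 0)))"
proof -
  interpret polynomial_map H
    using assms by unfold_locales (auto simp: poly_lower_degree_ge_def)
  show ?thesis
    using quasi_translation_iff_invariant Pseq_2_eq_0_iff[of H]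
      jacobian_mult_self_if_invariant invariant_if_jacobian_mult_self by blast
qed

end
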